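(* Let $I\subseteq\mathbb{R}$ be an interval, $p\in\mathbb{N}$, $\mathbf{d}=(d_1,\dots,d_p)\in\mathbb{N}^p$, $\alpha\in\mathbb{N}_p^{\mathbf{d}}$, and let $\mathbf{M}=(M_1,\dots,M_p)$ be a $\mathbf{d}$-averaging mapping on $I$ such that every $M_i$ is continuous and strict. Then there exists a unique $\mathbf{M}_\alpha$-invariant mean $K\colon I^p\to I$ if and only if the root graph $\mathcal{R}(G_\alpha)$ is ergodic.
   Context: A $k$-variable mean on an interval $I$ is a function $M\colon I^k\to I$ with $\min(x)\le M(x)\le\max(x)$ for all $x\in I^k$; it is strict if both inequalities are strict for every nonconstant $x$. A function $K\colon I^p\to I$ is $\mathbf{F}$-invariant for a map $\mathbf{F}\colon I^p\to I^p$ if $K\circ\mathbf{F}=K$. Notation: $\mathbb{N}_p=\{1,\dots,p\}$, $\mathbb{N}_p^{\mathbf{d}}=\mathbb{N}_p^{d_1}\times\dots\times\mathbb{N}_p^{d_p}$. A $\mathbf{d}$-averaging mapping on $I$ is a sequence $(M_1,\dots,M_p)$ where each $M_i$ is a $d_i$-variable mean on $I$. For $\alpha=(\alpha_1,\dots,\alpha_p)\in\mathbb{N}_p^{\mathbf{d}}$, $\alpha_i=(\alpha_{i,1},\dots,\alpha_{i,d_i})$, define $\mathbf{M}_\alpha\colon I^p\to I^p$ by $\mathbf{M}_\alpha(x)=\big(M_i(x_{\alpha_{i,1}},\dots,x_{\alpha_{i,d_i}})\big)_{i=1}^p$. The $\alpha$-incidence graph is $G_\alpha=(\mathbb{N}_p,E_\alpha)$,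 $E_\alpha=\{(\alpha_{i,j},i): i\in\mathbb{N}_p, j\in\mathbb{N}_{d_i}\}$. A digraph is ergodic if it is nonempty, irreducible (walks exist between any two vertices) and aperiodic (no integer $k>1$ divides the length of every cycle). The root $R(G)$ of a digraph $G$ is the union of the strongly connected components (classes of mutual reachability) that receive no edge from a vertex of another component; the root graph $\mathcal{R}(G)$ is the subgraph of $G$ induced by $R(G)$. *)

theory Defs
  imports "HOL-Analysis.Analysis"
begin

text \<open>Points of I^k are extensional functions on the index set {..<k}
  (indices are 0-based: index i here corresponds to i+1 in the paper).\<close>

abbreviation cube :: "real set \<Rightarrow> nat \<Rightarrow> (nat \<Rightarrow> real) set" where
  "cube I k \<equiv> PiE {..<k} (\<lambda>_. I)"

definition is_mean :: "real set \<Rightarrow> nat \<Rightarrow> ((nat \<Rightarrow> real) \<Rightarrow> real) \<Rightarrow> bool" where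
  "is_mean I k M \<longleftrightarrow> (\<forall>x\<in>cube I k.
      Min (x ` {..<k}) \<le> M x \<and> M x \<le> Max (x ` {..<k}))"

definition strict_mean :: "real set \<Rightarrow> nat \<Rightarrow> ((nat \<Rightarrow> real) \<Rightarrow> real) \<Rightarrow> bool" where
  "strict_mean I k M \<longleftrightarrow> is_mean I k M \<and> (\<forall>x\<in>cube I k.
      (\<exists>i<k. \<exists>j<k. x i \<noteq> x j) \<longrightarrow>
        Min (x ` {..<k}) < M x \<and> M x < Max (x ` {..<k}))"

definition M_alpha ::
  "nat \<Rightarrow> (nat \<Rightarrow> nat) \<Rightarrow> (nat \<Rightarrow> nat \<Rightarrow> nat) \<Rightarrow> (nat \<Rightarrow> (nat \<Rightarrow> real) \<Rightarrow> real)
     \<Rightarrow> (nat \<Rightarrow> real) \<Rightarrow> (nat \<Rightarrow> real)" where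
  "M_alpha p d \<alpha> M x =
     restrict (\<lambda>i. M i (restrict (\<lambda>j. x (\<alpha> i j)) {..<d i})) {..<p}"

definition invariant_mean ::
  "real set \<Rightarrow> nat \<Rightarrow> ((nat \<Rightarrow> real) \<Rightarrow> (nat \<Rightarrow> real)) \<Rightarrow> ((nat \<Rightarrow> real) \<Rightarrow> real) \<Rightarrow> bool" where
  "invariant_mean I p F K \<longleftrightarrow> is_mean I p K \<and> (\<forall>x\<in>cube I p. K (F x) = K x)"

definition inc_edges :: "nat \<Rightarrow> (nat \<Rightarrow> nat) \<Rightarrow> (nat \<Rightarrow> nat \<Rightarrow> nat) \<Rightarrow> (nat \<times> nat) set" where
  "inc_edges p d \<alpha> = {(\<alpha> i j, i) | i j. i < p \<and> j < d i}"

definition scc :: "(nat \<times> nat) set \<Rightarrow> nat \<Rightarrow> nat set" where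
  "scc E v = {w. (v, w) \<in> E\<^sup>* \<and> (w, v) \<in> E\<^sup>*}"

definition root_set :: "nat set \<Rightarrow> (nat \<times> nat) set \<Rightarrow> nat set" where
  "root_set V E = \<Union> {scc E v | v. v \<in> V \<and>
        (\<forall>(u, w)\<in>E. w \<in> scc E v \<longrightarrow> u \<in> scc E v)}"

definition irreducible_graph :: "nat set \<Rightarrow> (nat \<times> nat) set \<Rightarrow> bool" where
  "irreducible_graph V E \<longleftrightarrow> (\<forall>u\<in>V. \<forall>v\<in>V. (u, v) \<in> E\<^sup>*)"

text \<open>Cycles are taken as closed walks of positive length.\<close>
definition aperiodic_graph :: "nat set \<Rightarrow> (nat \<times> nat) set \<Rightarrow> bool" where
  "aperiodic_graph V E \<longleftrightarrow>
     \<not> (\<exists>k::nat. k > 1 \<and> (\<forall>v\<in>V. \<forall>n>0. (v, v) \<in> E ^^ n \<longrightarrow> k dvd n))"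

definition ergodic_graph :: "nat set \<Rightarrow> (nat \<times> nat) set \<Rightarrow> bool" where
  "ergodic_graph V E \<longleftrightarrow> V \<noteq> {} \<and> irreducible_graph V E \<and> aperiodic_graph V E"

end

theory Submission
  imports Defs
begin

text \<open>
  For an index set R closed under \<alpha> (i \<in> R implies \<alpha> i j \<in> R), the minimum over R of the
  iterates F^n x increases and the maximum decreases, and both limits are F-invariant means.
  If the root graph is not irreducible, two root classes, and if it has a period k > 1, its k
  cyclic classes, carry a point whose orbit takes the values a < b alternately on these classes;
  then the two limits are a and b, so the invariant mean is not unique.
  Conversely, an ergodic root graph is primitive: from a root vertex, every vertex is reached by
  walks of one common length. Since the means are strict, the spread max - min of a nonconstant
  point therefore drops strictly after finitely many steps. By continuity and compactness the
  spread of F^n x tends to 0, which squeezes every invariant mean onto the common limit.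
\<close>

lemma mean_le:
  assumes "is_mean I k M" "x \<in> cube I k" "0 < k" "\<forall>j<k. x j \<le> c"
  shows "M x \<le> c"
proof -
  have "M x \<le> Max (x ` {..<k})"
    using assms(1,2) unfolding is_mean_def by blast
  also have "\<dots> \<le> c"
    using assms(3,4) by (intro Max.boundedI) auto
  finally show ?thesis .
qed

lemma mean_ge:
  assumes "is_mean I k M" "x \<in> cube I k" "0 < k" "\<forall>j<k. c \<le> x j"
  shows "c \<le> M x"
proof -
  have "c \<le> Min (x ` {..<k})"
    using assms(3,4) by (intro Min.boundedI) auto
  also have "\<dots> \<le> M x"
    using assms(1,2) unfolding is_mean_def by blast
  finally show ?thesis .
qed

lemma strict_mean_less:
  assumes "strict_mean I k M" "x \<in> cube I k" "\<forall>j<k. x j \<le> c" "j0 < k" "x j0 < c"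
  shows "M x < c"
proof (cases "\<exists>i<k. \<exists>j<k. x i \<noteq> x j")
  case True
  then have "M x < Max (x ` {..<k})"
    using assms(1,2) unfolding strict_mean_def by blast
  also have "\<dots> \<le> c"
    using assms(3,4) by (intro Max.boundedI) auto
  finally show ?thesis .
next
  case False
  then have "\<forall>j<k. x j \<le> x j0"
    using assms(4) by (metis order_refl)
  then have "M x \<le> x j0"
    using assms(1,2,4) mean_le[of I k M x "x j0"] unfolding strict_mean_def by simp
  with assms(5) show ?thesis by simp
qed

lemma strict_mean_greater:
  assumes "strict_mean I k M" "x \<in> cube I k" "\<forall>j<k. c \<le> x j" "j0 < k" "c < x j0"
  shows "c < M x"
proof (cases "\<exists>i<k. \<exists>j<k. x i \<noteq> x j")
  case True
  have "c \<le> Min (x ` {..<k})"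
    using assms(3,4) by (intro Min.boundedI) auto
  also have "\<dots> < M x"
    using True assms(1,2) unfolding strict_mean_def by blast
  finally show ?thesis .
next
  case False
  then have "\<forall>j<k. x j0 \<le> x j"
    using assms(4) by (metis order_refl)
  then have "x j0 \<le> M x"
    using assms(1,2,4) mean_ge[of I k M x "x j0"] unfolding strict_mean_def by simp
  with assms(5) show ?thesis by simp
qed

lemma mean_in_interval:
  assumes "is_interval I" "is_mean I k M" "x \<in> cube I k" "0 < k"
  shows "M x \<in> I"
proof -
  have "x ` {..<k} \<subseteq> I" "finite (x ` {..<k})" "x ` {..<k} \<noteq> {}"
    using assms(3,4) by (auto simp: PiE_iff)
  then have "Min (x ` {..<k}) \<in> I" "Max (x ` {..<k}) \<in> I"
    using Min_in Max_in by blast+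
  then show ?thesis
    using assms(1-3) unfolding is_mean_def is_interval_1 by blast
qed

lemma Min_image_le_Max_image:
  fixes f :: "'a \<Rightarrow> 'b::linorder"
  assumes "finite A" "A \<noteq> {}"
  shows "Min (f ` A) \<le> Max (f ` A)"
proof -
  obtain a where "a \<in> A"
    using assms(2) by blast
  then have "Min (f ` A) \<le> f a" "f a \<le> Max (f ` A)"
    using assms(1) by simp_all
  then show ?thesis
    by (rule order.trans)
qed

section \<open>Numerical semigroups and walks in digraphs\<close>

lemma add_submonoid_mult_mem:
  fixes A :: "nat set"
  assumes "0 \<in> A" "\<And>a b. a \<in> A \<Longrightarrow> b \<in> A \<Longrightarrow> a + b \<in> A" "a \<in> A"
  shows "q * a \<in> A"
  using assms(3) by (induction q) (auto intro: assms(1,2))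

lemma add_submonoid_mem_if_ge_square:
  fixes A :: "nat set"
  assumes zero: "0 \<in> A" and add: "\<And>a b. a \<in> A \<Longrightarrow> b \<in> A \<Longrightarrow> a + b \<in> A"
    and "x \<in> A" "x + 1 \<in> A" "x * x \<le> n"
  shows "n \<in> A"
proof -
  note mult = add_submonoid_mult_mem[OF zero add]
  show ?thesis
  proof (cases "x = 0")
    case True
    then show ?thesis
      using mult[of 1 n] assms(4) by simp
  next
    case False
    define q r where "q = n div x" and "r = n mod x"
    have "r < x" "x \<le> q"
      using False assms(5) by (simp_all add: q_def r_def less_eq_div_iff_mult_less_eq)
    then have "r \<le> q"
      by simp
    then obtain s where "q = r + s"
      by (auto simp: le_iff_add)
    have "n = q * x + r"
      by (simp add: q_def r_def)
    also have "\<dots> = s * x + r * (x + 1)"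
      using \<open>q = r + s\<close> by (simp add: algebra_simps)
    finally have "n = s * x + r * (x + 1)" .
    moreover have "s * x + r * (x + 1) \<in> A"
      by (intro add mult assms(3,4))
    ultimately show ?thesis
      by simp
  qed
qed

lemma add_submonoid_contains_all_large:
  fixes A :: "nat set"
  assumes zero: "0 \<in> A" and add: "\<And>a b. a \<in> A \<Longrightarrow> b \<in> A \<Longrightarrow> a + b \<in> A"
    and no_common_divisor: "\<And>g. 1 < g \<Longrightarrow> \<exists>a\<in>A. \<not> g dvd a"
  shows "\<exists>N. \<forall>n\<ge>N. n \<in> A"
proof -
  note mult = add_submonoid_mult_mem[OF zero add]
  define gaps where "gaps = {g. 0 < g \<and> (\<exists>x\<in>A. x + g \<in> A)}"
  obtain a0 where "a0 \<in> A" "\<not> 2 dvd a0"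
    using no_common_divisor[of 2] by auto
  then have "0 < a0" "0 + a0 \<in> A"
    by (auto intro: gr0I)
  then have "a0 \<in> gaps"
    using zero unfolding gaps_def by blast
  define g where "g = (LEAST g. g \<in> gaps)"
  have "g \<in> gaps"
    unfolding g_def using \<open>a0 \<in> gaps\<close> by (rule LeastI)
  then obtain x0 where g: "0 < g" and x0: "x0 \<in> A" "x0 + g \<in> A"
    unfolding gaps_def by blast
  have g_dvd: "g dvd a" if "a \<in> A" for a
  proof -
    have "a + (a div g) * x0 = (a div g) * (x0 + g) + a mod g"
      by (simp add: algebra_simps)
    moreover have "a + (a div g) * x0 \<in> A"
      by (intro add mult that x0(1))
    ultimately have "(a div g) * (x0 + g) + a mod g \<in> A"
      by simp
    moreover have "(a div g) * (x0 + g) \<in> A"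
      by (intro mult x0(2))
    ultimately have "0 < a mod g \<Longrightarrow> a mod g \<in> gaps"
      unfolding gaps_def by blast
    moreover have "a mod g \<notin> gaps"
      using g not_less_Least[of "a mod g" "\<lambda>g. g \<in> gaps"] by (simp add: g_def)
    ultimately show ?thesis
      by (auto intro: gr0I)
  qed
  have "\<not> 1 < g"
    using no_common_divisor g_dvd by meson
  then have "g = 1"
    using g by simp
  then show ?thesis
    using add_submonoid_mem_if_ge_square[OF zero add x0(1)] x0(2) by blast
qed

lemma aperiodic_irreducible_walks_of_common_length:
  assumes "finite V" "irreducible_graph V G" "aperiodic_graph V G" "s \<in> V"
  shows "\<exists>t. \<forall>r\<in>V. (s, r) \<in> G ^^ t"
proof -
  have walk: "\<exists>n. (u, v) \<in> G ^^ n" if "u \<in> V" "v \<in> V" for u v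
    using assms(2) that unfolding irreducible_graph_def by (simp add: rtrancl_power)
  define A where "A = {n. (s, s) \<in> G ^^ n}"
  have "0 \<in> A"
    unfolding A_def by simp
  moreover have "a + b \<in> A" if "a \<in> A" "b \<in> A" for a b
    using that unfolding A_def by (auto intro: relpow_trans)
  moreover have "\<exists>a\<in>A. \<not> g dvd a" if g: "1 < g" for g
  proof -
    obtain v n where v: "v \<in> V" "(v, v) \<in> G ^^ n" "\<not> g dvd n"
      using assms(3) g unfolding aperiodic_graph_def by blast
    obtain a b where sv: "(s, v) \<in> G ^^ a" and vs: "(v, s) \<in> G ^^ b"
      using walk assms(4) v(1) by blast
    have "(s, s) \<in> G ^^ (a + b)" "(s, s) \<in> G ^^ (a + n + b)"
      using relpow_trans[OF sv vs] relpow_trans[OF relpow_trans[OF sv v(2)] vs] .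
    then have "a + b \<in> A" "n + (a + b) \<in> A"
      unfolding A_def by (simp_all add: ac_simps)
    moreover have "\<not> (g dvd a + b \<and> g dvd n + (a + b))"
      using v(3) dvd_add_left_iff by blast
    ultimately show ?thesis
      by blast
  qed
  ultimately obtain N where N: "\<forall>n\<ge>N. (s, s) \<in> G ^^ n"
    using add_submonoid_contains_all_large[of A] unfolding A_def by blast
  obtain l where l: "\<forall>r\<in>V. (s, r) \<in> G ^^ l r"
    using bchoice[of V "\<lambda>r n. (s, r) \<in> G ^^ n"] walk assms(4) by blast
  have "(s, r) \<in> G ^^ (N + sum l V)" if "r \<in> V" for r
  proof -
    have "l r \<le> sum l V"
      using assms(1) that by (intro member_le_sum) auto
    then have "(s, s) \<in> G ^^ (N + sum l V - l r)"
      using N by simp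
    from relpow_trans[OF this] show ?thesis
      using l that \<open>l r \<le> sum l V\<close> by fastforce
  qed
  then show ?thesis
    by blast
qed

lemma periodic_irreducible_cyclic_classes:
  assumes irr: "irreducible_graph V G" and edges: "G \<subseteq> V \<times> V"
    and in_edge: "\<And>v. v \<in> V \<Longrightarrow> \<exists>u. (u, v) \<in> G"
    and period: "\<forall>v\<in>V. \<forall>n>0. (v, v) \<in> G ^^ n \<longrightarrow> k dvd n"
    and "1 < k" and r: "r \<in> V"
  obtains A where "\<And>n. A n \<subseteq> V" "\<And>n. A n \<noteq> {}" "\<And>n. A n \<inter> A (Suc n) = {}"
    "\<And>n u v. (u, v) \<in> G \<Longrightarrow> u \<in> A n \<longleftrightarrow> v \<in> A (Suc n)"
proof
  define A where "A n = {v \<in> V. \<exists>L. (v, r) \<in> G ^^ L \<and> k dvd L + n}" for n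
  have walk: "\<exists>n. (u, v) \<in> G ^^ n" if "u \<in> V" "v \<in> V" for u v
    using irr that unfolding irreducible_graph_def by (simp add: rtrancl_power)
  have closed_walk_dvd: "k dvd L" if "(r, r) \<in> G ^^ L" for L
    using period r that by (cases "L = 0") auto
  have walk_dvd: "k dvd L' + c"
    if v: "v \<in> V" and walks: "(v, r) \<in> G ^^ L" "(v, r) \<in> G ^^ L'" and "k dvd L + c"
    for v L L' c
  proof -
    obtain b where "(r, v) \<in> G ^^ b"
      using walk r v by blast
    then have "k dvd b + L" "k dvd b + L'"
      using walks by (auto intro: closed_walk_dvd relpow_trans)
    moreover have "(L' + c) + (b + L) = (L + c) + (b + L')"
      by simp
    ultimately show ?thesis
      using \<open>k dvd L + c\<close> by (metis dvd_add dvd_add_left_iff)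
  qed
  have back_walk: "\<exists>v\<in>V. (v, r) \<in> G ^^ n" for n
  proof (induction n)
    case (Suc n)
    then obtain v u where "v \<in> V" "(v, r) \<in> G ^^ n" "(u, v) \<in> G"
      using in_edge by blast
    then show ?case
      using edges by (blast intro: relpow_Suc_I2)
  qed (use r in auto)
  show "A n \<subseteq> V" for n
    unfolding A_def by blast
  show "A n \<noteq> {}" for n
  proof -
    obtain v where "v \<in> V" "(v, r) \<in> G ^^ ((k - 1) * n)"
      using back_walk by blast
    moreover have "(k - 1) * n + n = k * n"
      using \<open>1 < k\<close> by (simp add: algebra_simps)
    ultimately show ?thesis
      unfolding A_def by (metis (mono_tags, lifting) dvd_triv_left empty_iff mem_Collect_eq)
  qed
  show "A n \<inter> A (Suc n) = {}" for n
  proof (rule ccontr)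
    assume "A n \<inter> A (Suc n) \<noteq> {}"
    then obtain v L L' where "v \<in> V" "(v, r) \<in> G ^^ L" "(v, r) \<in> G ^^ L'"
      "k dvd L + n" "k dvd L' + Suc n"
      unfolding A_def by blast
    then have "k dvd L + n" "k dvd (L + n) + 1"
      using walk_dvd[of v L' L "Suc n"] by simp_all
    then have "k dvd 1"
      using dvd_add_right_iff by blast
    with \<open>1 < k\<close> show False
      by simp
  qed
  show "u \<in> A n \<longleftrightarrow> v \<in> A (Suc n)" if uv: "(u, v) \<in> G" for n u v
  proof
    assume "u \<in> A n"
    then obtain L where "u \<in> V" "(u, r) \<in> G ^^ L" "k dvd L + n"
      unfolding A_def by blast
    moreover obtain L' where "(v, r) \<in> G ^^ L'"
      using walk edges uv r by blast
    moreover have "(u, r) \<in> G ^^ Suc L'"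
      using uv calculation(4) by (rule relpow_Suc_I2)
    ultimately have "k dvd Suc L' + n"
      using walk_dvd by blast
    then show "v \<in> A (Suc n)"
      unfolding A_def using edges uv \<open>(v, r) \<in> G ^^ L'\<close> by auto
  next
    assume "v \<in> A (Suc n)"
    then obtain L where L: "(v, r) \<in> G ^^ L" "k dvd L + Suc n"
      unfolding A_def by blast
    have "(u, r) \<in> G ^^ Suc L"
      using uv L(1) by (rule relpow_Suc_I2)
    moreover have "k dvd Suc L + n"
      using L(2) by simp
    ultimately show "u \<in> A n"
      unfolding A_def using edges uv by blast
  qed
qed

lemma scc_eq: "w \<in> scc E v \<Longrightarrow> scc E w = scc E v"
  unfolding scc_def by (auto intro: rtrancl_trans)

lemma rtrancl_Restr_scc:
  assumes "(u, v) \<in> E\<^sup>*" "u \<in> scc E a" "v \<in> scc E a"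
  shows "(u, v) \<in> (Restr E (scc E a))\<^sup>*"
  using assms
proof (induction rule: converse_rtrancl_induct)
  case (step u w)
  then have "w \<in> scc E a"
    unfolding scc_def by (auto intro: rtrancl_trans rtrancl_into_rtrancl)
  with step show ?case
    by (blast intro: converse_rtrancl_into_rtrancl)
qed simp

lemma tendsto_fun_iff:
  fixes f :: "'b \<Rightarrow> 'a \<Rightarrow> 'c::topological_space"
  shows "(f \<longlongrightarrow> l) F \<longleftrightarrow> (\<forall>i. ((\<lambda>c. f c i) \<longlongrightarrow> l i) F)"
proof -
  have "(f \<longlongrightarrow> l) F \<longleftrightarrow> limitin (product_topology (\<lambda>i. euclidean) UNIV) f l F"
    by (simp add: euclidean_product_topology)
  also have "\<dots> \<longleftrightarrow> (\<forall>i. ((\<lambda>c. f c i) \<longlongrightarrow> l i) F)"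
    by (simp add: limitin_componentwise)
  finally show ?thesis .
qed

lemma continuous_on_Max_image:
  fixes f :: "'a::topological_space \<Rightarrow> 'i \<Rightarrow> 'b::linorder_topology"
  assumes "finite A" "A \<noteq> {}" "\<And>i. i \<in> A \<Longrightarrow> continuous_on S (\<lambda>x. f x i)"
  shows "continuous_on S (\<lambda>x. Max (f x ` A))"
  using assms by (induction A rule: finite_ne_induct) (auto intro: continuous_on_max)

lemma continuous_on_Min_image:
  fixes f :: "'a::topological_space \<Rightarrow> 'i \<Rightarrow> 'b::linorder_topology"
  assumes "finite A" "A \<noteq> {}" "\<And>i. i \<in> A \<Longrightarrow> continuous_on S (\<lambda>x. f x i)"
  shows "continuous_on S (\<lambda>x. Min (f x ` A))"
  using assms by (induction A rule: finite_ne_induct) (auto intro: continuous_on_min)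

lemma continuous_on_funpow:
  assumes "continuous_on S f" "f ` S \<subseteq> S"
  shows "continuous_on S (f ^^ n)"
proof (induction n)
  case (Suc n)
  have "(f ^^ n) ` S \<subseteq> S"
    using assms(2) by (induction n) auto
  then show ?case
    using continuous_on_compose2[OF assms(1) Suc.IH] by (simp add: comp_def)
qed (simp add: continuous_on_id)

lemma convergent_subseq_coordinates:
  fixes z :: "nat \<Rightarrow> nat \<Rightarrow> real"
  assumes "\<And>i. i < n \<Longrightarrow> bounded (range (\<lambda>k. z k i))"
  shows "\<exists>r. strict_mono r \<and> (\<forall>i<n. convergent (\<lambda>k. z (r k) i))"
  using assms
proof (induction n)
  case 0
  show ?case
    using strict_mono_id by blast
next
  case (Suc n)
  then obtain r where r: "strict_mono r" "\<forall>i<n. convergent (\<lambda>k. z (r k) i)"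
    by auto
  have "bounded (range (\<lambda>k. z (r k) n))"
    using Suc.prems[of n] by (rule bounded_subset) auto
  then obtain l r' where r': "strict_mono r'" "((\<lambda>k. z (r k) n) \<circ> r') \<longlonglongrightarrow> l"
    using bounded_imp_convergent_subsequence by blast
  have "convergent (\<lambda>k. z (r (r' k)) i)" if "i < Suc n" for i
  proof (cases "i = n")
    case True
    then show ?thesis
      using r'(2) unfolding convergent_def comp_def by blast
  next
    case False
    then have "i < n"
      using that by simp
    then obtain l' where "(\<lambda>k. z (r k) i) \<longlonglongrightarrow> l'"
      using r(2) unfolding convergent_def by blast
    from LIMSEQ_subseq_LIMSEQ[OF this r'(1)] show ?thesis
      unfolding convergent_def comp_def by blast
  qed
  moreover have "strict_mono (r \<circ> r')"
    using r(1) r'(1) by (rule strict_mono_o)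
  ultimately show ?case
    unfolding comp_def by blast
qed

definition has_unique_invariant_mean ::
  "real set \<Rightarrow> nat \<Rightarrow> ((nat \<Rightarrow> real) \<Rightarrow> (nat \<Rightarrow> real)) \<Rightarrow> bool" where
  "has_unique_invariant_mean I p F \<longleftrightarrow> (\<exists>K. invariant_mean I p F K \<and>
     (\<forall>K'. invariant_mean I p F K' \<longrightarrow> (\<forall>x\<in>cube I p. K' x = K x)))"

locale averaging_mapping =
  fixes I :: "real set" and p :: nat and d :: "nat \<Rightarrow> nat"
    and \<alpha> :: "nat \<Rightarrow> nat \<Rightarrow> nat" and M :: "nat \<Rightarrow> (nat \<Rightarrow> real) \<Rightarrow> real"
  assumes I: "is_interval I" and I_nondeg: "\<exists>a\<in>I. \<exists>b\<in>I. a < b"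
    and p: "p \<ge> 1"
    and d: "\<forall>i<p. d i \<ge> 1"
    and \<alpha>: "\<forall>i<p. \<forall>j<d i. \<alpha> i j < p"
    and M_strict: "\<forall>i<p. strict_mean I (d i) (M i)"
    and M_cont: "\<forall>i<p. continuous_on (cube I (d i)) (M i)"
begin

abbreviation "F \<equiv> M_alpha p d \<alpha> M"

definition input :: "(nat \<Rightarrow> real) \<Rightarrow> nat \<Rightarrow> nat \<Rightarrow> real" where
  "input x i = restrict (\<lambda>j. x (\<alpha> i j)) {..<d i}"

lemma M_alpha_apply: "i < p \<Longrightarrow> F x i = M i (input x i)"
  by (simp add: M_alpha_def input_def)

lemma input_in_cube: "x \<in> cube I p \<Longrightarrow> i < p \<Longrightarrow> input x i \<in> cube I (d i)"
  using \<alpha> by (auto simp: PiE_iff input_def)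

lemma d_pos: "i < p \<Longrightarrow> 0 < d i"
  using d by fastforce

lemma M_mean: "i < p \<Longrightarrow> is_mean I (d i) (M i)"
  using M_strict unfolding strict_mean_def by blast

lemma M_alpha_le:
  assumes "x \<in> cube I p" "i < p" "\<forall>j<d i. x (\<alpha> i j) \<le> c"
  shows "F x i \<le> c"
  using mean_le[OF M_mean input_in_cube d_pos] assms by (simp add: M_alpha_apply input_def)

lemma M_alpha_ge:
  assumes "x \<in> cube I p" "i < p" "\<forall>j<d i. c \<le> x (\<alpha> i j)"
  shows "c \<le> F x i"
  using mean_ge[OF M_mean input_in_cube d_pos] assms by (simp add: M_alpha_apply input_def)

lemma M_alpha_eq:
  assumes "x \<in> cube I p" "i < p" "\<forall>j<d i. x (\<alpha> i j) = c"
  shows "F x i = c"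
  using M_alpha_le[OF assms(1,2), of c] M_alpha_ge[OF assms(1,2), of c] assms(3) by simp

lemma M_alpha_less:
  assumes "x \<in> cube I p" "i < p" "\<forall>j<d i. x (\<alpha> i j) \<le> c" "j0 < d i" "x (\<alpha> i j0) < c"
  shows "F x i < c"
  using strict_mean_less[of I "d i" "M i" "input x i" c j0] M_strict input_in_cube assms
  by (simp add: M_alpha_apply input_def)

lemma M_alpha_greater:
  assumes "x \<in> cube I p" "i < p" "\<forall>j<d i. c \<le> x (\<alpha> i j)" "j0 < d i" "c < x (\<alpha> i j0)"
  shows "c < F x i"
  using strict_mean_greater[of I "d i" "M i" "input x i" c j0] M_strict input_in_cube assms
  by (simp add: M_alpha_apply input_def)

lemma M_alpha_in_cube:
  assumes "x \<in> cube I p"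
  shows "F x \<in> cube I p"
proof (rule PiE_I)
  fix i
  assume "i \<in> {..<p}"
  then show "F x i \<in> I"
    using mean_in_interval[OF I M_mean input_in_cube[OF assms] d_pos] by (simp add: M_alpha_apply)
qed (simp add: M_alpha_def)

lemma funpow_M_alpha_in_cube: "x \<in> cube I p \<Longrightarrow> (F ^^ n) x \<in> cube I p"
  by (induction n) (simp_all add: M_alpha_in_cube)

lemma invariant_mean_funpow:
  assumes "invariant_mean I p F K" "x \<in> cube I p"
  shows "K ((F ^^ n) x) = K x"
proof (induction n)
  case (Suc n)
  have "K (F ((F ^^ n) x)) = K ((F ^^ n) x)"
    using assms funpow_M_alpha_in_cube unfolding invariant_mean_def by blast
  with Suc show ?case
    by simp
qed simp

subsection \<open>Invariant means from extremal orbit values\<close>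

definition alpha_closed :: "nat set \<Rightarrow> bool" where
  "alpha_closed R \<longleftrightarrow> R \<subseteq> {..<p} \<and> R \<noteq> {} \<and> (\<forall>i\<in>R. \<forall>j<d i. \<alpha> i j \<in> R)"

lemma lessThan_p_nonempty: "{..<p} \<noteq> {}"
  using p by (simp add: lessThan_empty_iff)

lemma alpha_closed_lessThan: "alpha_closed {..<p}"
  using lessThan_p_nonempty \<alpha> unfolding alpha_closed_def by auto

lemma alpha_closed_Un: "alpha_closed A \<Longrightarrow> alpha_closed B \<Longrightarrow> alpha_closed (A \<union> B)"
  unfolding alpha_closed_def by blast

lemma alpha_closed_finite: "alpha_closed R \<Longrightarrow> finite R"
  unfolding alpha_closed_def using finite_subset by blast

lemma funpow_le_on_alpha_closed:
  assumes R: "alpha_closed R" and x: "x \<in> cube I p" and c: "\<forall>i\<in>R. x i \<le> c" and "i \<in> R"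
  shows "(F ^^ n) x i \<le> c"
  using \<open>i \<in> R\<close>
proof (induction n arbitrary: i)
  case (Suc n)
  then have "i < p" "\<forall>j<d i. (F ^^ n) x (\<alpha> i j) \<le> c"
    using R unfolding alpha_closed_def by auto
  then show ?case
    using M_alpha_le[OF funpow_M_alpha_in_cube[OF x]] by simp
qed (use c in simp)

lemma funpow_ge_on_alpha_closed:
  assumes R: "alpha_closed R" and x: "x \<in> cube I p" and c: "\<forall>i\<in>R. c \<le> x i" and "i \<in> R"
  shows "c \<le> (F ^^ n) x i"
  using \<open>i \<in> R\<close>
proof (induction n arbitrary: i)
  case (Suc n)
  then have "i < p" "\<forall>j<d i. c \<le> (F ^^ n) x (\<alpha> i j)"
    using R unfolding alpha_closed_def by auto
  then show ?case
    using M_alpha_ge[OF funpow_M_alpha_in_cube[OF x]] by simp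
qed (use c in simp)

lemma Min_funpow_ge:
  assumes "alpha_closed R" "R \<subseteq> S" "finite S" "x \<in> cube I p"
  shows "Min (x ` S) \<le> Min ((F ^^ n) x ` R)"
proof -
  have "\<forall>i\<in>R. Min (x ` S) \<le> x i"
    using assms(2,3) by auto
  then have "\<forall>i\<in>R. Min (x ` S) \<le> (F ^^ n) x i"
    using funpow_ge_on_alpha_closed[OF assms(1,4)] by blast
  then show ?thesis
    using assms(1) alpha_closed_finite unfolding alpha_closed_def by (intro Min.boundedI) auto
qed

lemma Max_funpow_le:
  assumes "alpha_closed R" "R \<subseteq> S" "finite S" "x \<in> cube I p"
  shows "Max ((F ^^ n) x ` R) \<le> Max (x ` S)"
proof -
  have "\<forall>i\<in>R. x i \<le> Max (x ` S)"
    using assms(2,3) by auto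
  then have "\<forall>i\<in>R. (F ^^ n) x i \<le> Max (x ` S)"
    using funpow_le_on_alpha_closed[OF assms(1,4)] by blast
  then show ?thesis
    using assms(1) alpha_closed_finite unfolding alpha_closed_def by (intro Max.boundedI) auto
qed

lemma Min_le_Max_funpow: "alpha_closed R \<Longrightarrow> Min ((F ^^ n) x ` R) \<le> Max ((F ^^ n) x ` R)"
  using Min_image_le_Max_image alpha_closed_finite unfolding alpha_closed_def by blast

lemma invariant_mean_of_orbit_limit:
  assumes lim: "\<And>x. x \<in> cube I p \<Longrightarrow> (\<lambda>n. S ((F ^^ n) x)) \<longlonglongrightarrow> K x"
    and bounds: "\<And>x n. x \<in> cube I p \<Longrightarrow>
      Min (x ` {..<p}) \<le> S ((F ^^ n) x) \<and> S ((F ^^ n) x) \<le> Max (x ` {..<p})"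
  shows "invariant_mean I p F K"
  unfolding invariant_mean_def is_mean_def
proof (intro conjI ballI)
  fix x
  assume x: "x \<in> cube I p"
  show "Min (x ` {..<p}) \<le> K x"
    using LIMSEQ_le_const[OF lim[OF x]] bounds[OF x] by blast
  show "K x \<le> Max (x ` {..<p})"
    using LIMSEQ_le_const2[OF lim[OF x]] bounds[OF x] by blast
  have "(\<lambda>n. S ((F ^^ n) (F x))) \<longlonglongrightarrow> K x"
    using LIMSEQ_Suc[OF lim[OF x]] by (simp add: funpow_Suc_right del: funpow.simps)
  then show "K (F x) = K x"
    using lim[OF M_alpha_in_cube[OF x]] LIMSEQ_unique by blast
qed

definition lower_limit :: "nat set \<Rightarrow> (nat \<Rightarrow> real) \<Rightarrow> real" where
  "lower_limit R x = (SUP n. Min ((F ^^ n) x ` R))"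

definition upper_limit :: "nat set \<Rightarrow> (nat \<Rightarrow> real) \<Rightarrow> real" where
  "upper_limit R x = (INF n. Max ((F ^^ n) x ` R))"

lemma tendsto_lower_limit:
  assumes R: "alpha_closed R" and x: "x \<in> cube I p"
  shows "(\<lambda>n. Min ((F ^^ n) x ` R)) \<longlonglongrightarrow> lower_limit R x"
  unfolding lower_limit_def
proof (rule LIMSEQ_incseq_SUP)
  have "Min ((F ^^ n) x ` R) \<le> Max (x ` R)" for n
    using Min_le_Max_funpow[OF R] Max_funpow_le[OF R order_refl alpha_closed_finite[OF R] x]
    by (rule order.trans)
  then show "bdd_above (range (\<lambda>n. Min ((F ^^ n) x ` R)))"
    by (rule bdd_aboveI2)
  have "Min ((F ^^ n) x ` R) \<le> Min ((F ^^ 1) ((F ^^ n) x) ` R)" for n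
    using Min_funpow_ge[OF R order_refl alpha_closed_finite[OF R] funpow_M_alpha_in_cube[OF x]] .
  then show "incseq (\<lambda>n. Min ((F ^^ n) x ` R))"
    by (intro incseq_SucI) simp
qed

lemma tendsto_upper_limit:
  assumes R: "alpha_closed R" and x: "x \<in> cube I p"
  shows "(\<lambda>n. Max ((F ^^ n) x ` R)) \<longlonglongrightarrow> upper_limit R x"
  unfolding upper_limit_def
proof (rule LIMSEQ_decseq_INF)
  have "Min (x ` R) \<le> Max ((F ^^ n) x ` R)" for n
    using Min_funpow_ge[OF R order_refl alpha_closed_finite[OF R] x] Min_le_Max_funpow[OF R]
    by (rule order.trans)
  then show "bdd_below (range (\<lambda>n. Max ((F ^^ n) x ` R)))"
    by (rule bdd_belowI2)
  have "Max ((F ^^ 1) ((F ^^ n) x) ` R) \<le> Max ((F ^^ n) x ` R)" for n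
    using Max_funpow_le[OF R order_refl alpha_closed_finite[OF R] funpow_M_alpha_in_cube[OF x]] .
  then show "decseq (\<lambda>n. Max ((F ^^ n) x ` R))"
    by (intro decseq_SucI) simp
qed

lemma Min_Max_funpow_bounds:
  assumes R: "alpha_closed R" and x: "x \<in> cube I p"
  shows "Min (x ` {..<p}) \<le> Min ((F ^^ n) x ` R)" "Max ((F ^^ n) x ` R) \<le> Max (x ` {..<p})"
  using R Min_funpow_ge[OF R _ _ x] Max_funpow_le[OF R _ _ x] unfolding alpha_closed_def by auto

lemma invariant_mean_lower_limit:
  assumes R: "alpha_closed R"
  shows "invariant_mean I p F (lower_limit R)"
proof (rule invariant_mean_of_orbit_limit)
  show "(\<lambda>n. Min ((F ^^ n) x ` R)) \<longlonglongrightarrow> lower_limit R x" if "x \<in> cube I p" for x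
    using R that by (rule tendsto_lower_limit)
  show "Min (x ` {..<p}) \<le> Min ((F ^^ n) x ` R) \<and> Min ((F ^^ n) x ` R) \<le> Max (x ` {..<p})"
    if "x \<in> cube I p" for x n
    using Min_Max_funpow_bounds[OF R that, of n] Min_le_Max_funpow[OF R, of n x] by linarith
qed

lemma invariant_mean_upper_limit:
  assumes R: "alpha_closed R"
  shows "invariant_mean I p F (upper_limit R)"
proof (rule invariant_mean_of_orbit_limit)
  show "(\<lambda>n. Max ((F ^^ n) x ` R)) \<longlonglongrightarrow> upper_limit R x" if "x \<in> cube I p" for x
    using R that by (rule tendsto_upper_limit)
  show "Min (x ` {..<p}) \<le> Max ((F ^^ n) x ` R) \<and> Max ((F ^^ n) x ` R) \<le> Max (x ` {..<p})"
    if "x \<in> cube I p" for x n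
    using Min_Max_funpow_bounds[OF R that, of n] Min_le_Max_funpow[OF R, of n x] by linarith
qed

lemma not_unique_if_alternating_classes:
  assumes R: "alpha_closed R" and A: "\<And>n. A n \<subseteq> R" "\<And>n. A n \<noteq> {}" "\<And>n. A n \<noteq> R"
    and step: "\<And>n i j. i \<in> R \<Longrightarrow> j < d i \<Longrightarrow> \<alpha> i j \<in> A n \<longleftrightarrow> i \<in> A (Suc n)"
  shows "\<not> has_unique_invariant_mean I p F"
proof
  assume "has_unique_invariant_mean I p F"
  then obtain K where K: "\<And>K'. invariant_mean I p F K' \<Longrightarrow> \<forall>x\<in>cube I p. K' x = K x"
    unfolding has_unique_invariant_mean_def by blast
  obtain a b where ab: "a \<in> I" "b \<in> I" "a < b"
    using I_nondeg by blast
  define x where "x = restrict (\<lambda>i. if i \<in> A 0 then a else b) {..<p}"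
  have x: "x \<in> cube I p"
    using ab by (simp add: x_def)
  have orbit: "(F ^^ n) x i = (if i \<in> A n then a else b)" if "i \<in> R" for n i
    using that
  proof (induction n arbitrary: i)
    case 0
    then show ?case
      using R unfolding alpha_closed_def x_def by auto
  next
    case (Suc n)
    then have "i < p" and closed: "\<And>j. j < d i \<Longrightarrow> \<alpha> i j \<in> R"
      using R unfolding alpha_closed_def by auto
    have "(F ^^ n) x (\<alpha> i j) = (if i \<in> A (Suc n) then a else b)" if "j < d i" for j
      using Suc.IH[OF closed[OF that]] step[OF Suc.prems that, of n] by simp
    then show ?case
      using M_alpha_eq[OF funpow_M_alpha_in_cube[OF x] \<open>i < p\<close>] by simp
  qed
  have "(F ^^ n) x ` R = {a, b}" for n
  proof -
    have "(F ^^ n) x ` R = (\<lambda>i. if i \<in> A n then a else b) ` R"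
      using orbit by (rule image_cong[OF refl])
    also have "\<dots> = {a, b}"
      using A(1)[of n] A(2)[of n] A(3)[of n] by auto
    finally show ?thesis .
  qed
  then have "lower_limit R x = a" "upper_limit R x = b"
    using ab(3) by (simp_all add: lower_limit_def upper_limit_def)
  moreover have "lower_limit R x = K x" "upper_limit R x = K x"
    using K invariant_mean_lower_limit[OF R] invariant_mean_upper_limit[OF R] x by blast+
  ultimately show False
    using ab(3) by simp
qed

subsection \<open>The root graph\<close>

abbreviation "E \<equiv> inc_edges p d \<alpha>"
abbreviation "RV \<equiv> root_set {..<p} E"
abbreviation "RE \<equiv> Restr E RV"

lemma inc_edges_iff: "(u, v) \<in> E \<longleftrightarrow> v < p \<and> (\<exists>j<d v. u = \<alpha> v j)"
  unfolding inc_edges_def by auto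

lemma inc_edge: "i < p \<Longrightarrow> j < d i \<Longrightarrow> (\<alpha> i j, i) \<in> E"
  unfolding inc_edges_iff by blast

lemma rtrancl_inc_edges_lessThan: "(u, v) \<in> E\<^sup>* \<Longrightarrow> u \<noteq> v \<Longrightarrow> u < p"
  by (induction rule: converse_rtrancl_induct) (auto simp: inc_edges_iff \<alpha>)

definition root_vertex :: "nat \<Rightarrow> bool" where
  "root_vertex v \<longleftrightarrow> v < p \<and> (\<forall>(u, w)\<in>E. w \<in> scc E v \<longrightarrow> u \<in> scc E v)"

lemma root_set_iff: "i \<in> RV \<longleftrightarrow> (\<exists>v. root_vertex v \<and> i \<in> scc E v)"
  unfolding root_set_def root_vertex_def by blast

lemma alpha_closed_scc:
  assumes "root_vertex v"
  shows "alpha_closed (scc E v)"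
proof -
  have "scc E v \<subseteq> {..<p}"
    using assms rtrancl_inc_edges_lessThan unfolding root_vertex_def scc_def by fastforce
  moreover have "v \<in> scc E v"
    unfolding scc_def by simp
  moreover have "\<alpha> i j \<in> scc E v" if "i \<in> scc E v" "j < d i" for i j
    using assms inc_edge that calculation(1) unfolding root_vertex_def by blast
  ultimately show ?thesis
    unfolding alpha_closed_def by blast
qed

lemma exists_root_ancestor:
  assumes "v < p"
  shows "\<exists>u. root_vertex u \<and> (u, v) \<in> E\<^sup>*"
proof -
  define anc where "anc w = {u. (u, w) \<in> E\<^sup>*}" for w
  have "anc w \<subseteq> insert w {..<p}" for w
    unfolding anc_def using rtrancl_inc_edges_lessThan by auto
  then have fin: "finite (anc w)" for w
    using finite_subset by blast
  \<comment> \<open>an ancestor of v with the fewest ancestors lies in a root class\<close>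
  obtain u where u: "(u, v) \<in> E\<^sup>*" and min: "\<And>w. (w, v) \<in> E\<^sup>* \<Longrightarrow> card (anc u) \<le> card (anc w)"
    using ex_has_least_nat[of "\<lambda>u. (u, v) \<in> E\<^sup>*" v "\<lambda>u. card (anc u)"] by auto
  have "w \<in> scc E u" if "(w, w') \<in> E" "w' \<in> scc E u" for w w'
  proof -
    have wu: "(w, u) \<in> E\<^sup>*"
      using that unfolding scc_def by auto
    then have "anc w \<subseteq> anc u" "(w, v) \<in> E\<^sup>*"
      using u unfolding anc_def by (auto intro: rtrancl_trans)
    then have "anc w = anc u"
      using min[of w] fin[of u] card_seteq by blast
    then show ?thesis
      using wu unfolding anc_def scc_def by auto
  qed
  moreover have "u < p"
    using assms u rtrancl_inc_edges_lessThan by (cases "u = v") auto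
  ultimately show ?thesis
    using u unfolding root_vertex_def by blast
qed

lemma alpha_closed_root_set: "alpha_closed RV"
proof -
  obtain u where "root_vertex u"
    using exists_root_ancestor[of 0] p by auto
  then have "RV \<noteq> {}"
    using root_set_iff unfolding scc_def by blast
  then show ?thesis
    using alpha_closed_scc root_set_iff unfolding alpha_closed_def by blast
qed

lemma root_edge: "i \<in> RV \<Longrightarrow> j < d i \<Longrightarrow> (\<alpha> i j, i) \<in> RE"
  using alpha_closed_root_set inc_edge unfolding alpha_closed_def by blast

lemma irreducible_root_graph_if_unique:
  assumes "has_unique_invariant_mean I p F"
  shows "irreducible_graph RV RE"
  unfolding irreducible_graph_def
proof (intro ballI)
  fix u v
  assume "u \<in> RV" "v \<in> RV"
  then obtain a b where a: "root_vertex a" "u \<in> scc E a" and b: "root_vertex b" "v \<in> scc E b"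
    using root_set_iff by blast
  show "(u, v) \<in> RE\<^sup>*"
  proof (cases "scc E a = scc E b")
    case True
    then have "(u, v) \<in> E\<^sup>*"
      using a b unfolding scc_def by (blast intro: rtrancl_trans)
    then have "(u, v) \<in> (Restr E (scc E a))\<^sup>*"
      using a b True by (intro rtrancl_Restr_scc) auto
    moreover have "scc E a \<subseteq> RV"
      using a root_set_iff by blast
    ultimately show ?thesis
      using rtrancl_mono[of "Restr E (scc E a)" RE] by blast
  next
    case False
    \<comment> \<open>alternating classes: the constant family A n = scc E a\<close>
    then have disjoint: "scc E a \<inter> scc E b = {}"
      using scc_eq by blast
    have "\<not> has_unique_invariant_mean I p F"
    proof (rule not_unique_if_alternating_classes)
      show "alpha_closed (scc E a \<union> scc E b)"
        using a b by (intro alpha_closed_Un alpha_closed_scc)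
      show "scc E a \<noteq> scc E a \<union> scc E b"
        using b disjoint by blast
      show "\<alpha> i j \<in> scc E a \<longleftrightarrow> i \<in> scc E a" if "i \<in> scc E a \<union> scc E b" "j < d i" for i j
        using that disjoint alpha_closed_scc[OF a(1)] alpha_closed_scc[OF b(1)]
        unfolding alpha_closed_def by blast
    qed (use a in blast)+
    with assms show ?thesis
      by blast
  qed
qed

lemma aperiodic_root_graph_if_unique:
  assumes "has_unique_invariant_mean I p F"
  shows "aperiodic_graph RV RE"
  unfolding aperiodic_graph_def
proof
  assume "\<exists>k>1. \<forall>v\<in>RV. \<forall>n>0. (v, v) \<in> RE ^^ n \<longrightarrow> k dvd n"
  then obtain k where "1 < k" and period: "\<forall>v\<in>RV. \<forall>n>0. (v, v) \<in> RE ^^ n \<longrightarrow> k dvd n"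
    by blast
  obtain r where "r \<in> RV"
    using alpha_closed_root_set unfolding alpha_closed_def by blast
  have edges: "RE \<subseteq> RV \<times> RV"
    by blast
  have in_edge: "\<exists>u. (u, v) \<in> RE" if "v \<in> RV" for v
  proof -
    have "v < p"
      using that alpha_closed_root_set unfolding alpha_closed_def by blast
    then show ?thesis
      using root_edge[OF that d_pos] by blast
  qed
  obtain A where A: "\<And>n. A n \<subseteq> RV" "\<And>n. A n \<noteq> {}" "\<And>n. A n \<inter> A (Suc n) = {}"
    and step: "\<And>n u v. (u, v) \<in> RE \<Longrightarrow> u \<in> A n \<longleftrightarrow> v \<in> A (Suc n)"
    using periodic_irreducible_cyclic_classes[OF irreducible_root_graph_if_unique[OF assms]
        edges in_edge period \<open>1 < k\<close> \<open>r \<in> RV\<close>] by metis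
  have "\<not> has_unique_invariant_mean I p F"
  proof (rule not_unique_if_alternating_classes[OF alpha_closed_root_set A(1,2)])
    show "A n \<noteq> RV" for n
    proof
      assume "A n = RV"
      then have "A n \<inter> A (Suc n) = A (Suc n)"
        using A(1) by blast
      with A(2)[of "Suc n"] A(3)[of n] show False
        by simp
    qed
    show "\<alpha> i j \<in> A n \<longleftrightarrow> i \<in> A (Suc n)" if "i \<in> RV" "j < d i" for n i j
      using step[OF root_edge[OF that]] .
  qed
  with assms show False
    by blast
qed

subsection \<open>Contraction under ergodicity\<close>

lemma walks_of_common_length_from_root:
  assumes erg: "ergodic_graph RV RE" and j: "j \<in> RV"
  shows "\<exists>T. \<forall>v<p. (j, v) \<in> E ^^ T"
proof -
  have RV: "alpha_closed RV"
    by (rule alpha_closed_root_set)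
  obtain t where t: "\<forall>r\<in>RV. (j, r) \<in> RE ^^ t"
    using aperiodic_irreducible_walks_of_common_length[OF alpha_closed_finite[OF RV] _ _ j] erg
    unfolding ergodic_graph_def by blast
  \<comment> \<open>every root vertex has an in-neighbour in RV, so the common length t can be increased\<close>
  have root_walks: "\<forall>r\<in>RV. (j, r) \<in> E ^^ (t + k)" for k
  proof (induction k)
    case 0
    show ?case
      using t relpowp_mono[to_set, of RE E] by auto
  next
    case (Suc k)
    show ?case
    proof
      fix r
      assume "r \<in> RV"
      then have "r < p" "\<alpha> r 0 \<in> RV"
        using RV d_pos unfolding alpha_closed_def by auto
      then have "(j, \<alpha> r 0) \<in> E ^^ (t + k)" "(\<alpha> r 0, r) \<in> E"
        using Suc inc_edge d_pos by blast+
      then show "(j, r) \<in> E ^^ (t + Suc k)"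
        using relpow_Suc_I by simp
    qed
  qed
  have "\<exists>r l. r \<in> RV \<and> (r, v) \<in> E ^^ l" if v: "v < p" for v
  proof -
    obtain u where "root_vertex u" "(u, v) \<in> E\<^sup>*"
      using exists_root_ancestor[OF v] by blast
    moreover have "u \<in> scc E u"
      unfolding scc_def by simp
    ultimately show ?thesis
      using root_set_iff rtrancl_power by blast
  qed
  then obtain r l where rl: "\<And>v. v < p \<Longrightarrow> r v \<in> RV \<and> (r v, v) \<in> E ^^ l v"
    by metis
  have "(j, v) \<in> E ^^ (t + sum l {..<p})" if "v < p" for v
  proof -
    have "l v \<le> sum l {..<p}"
      using that by (intro member_le_sum) auto
    moreover have "(j, r v) \<in> E ^^ (t + (sum l {..<p} - l v))"
      using root_walks rl[OF that] by blast
    ultimately show ?thesis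
      using relpow_trans[OF _ conjunct2[OF rl[OF that]]] by fastforce
  qed
  then show ?thesis
    by blast
qed

lemma funpow_less_along_walk:
  assumes x: "x \<in> cube I p" and c: "\<forall>i<p. x i \<le> c" and "x j < c" and "(j, v) \<in> E ^^ n"
  shows "(F ^^ n) x v < c"
  using assms(4)
proof (induction n arbitrary: v)
  case (Suc n)
  from Suc.prems obtain w where "(j, w) \<in> E ^^ n" "(w, v) \<in> E"
    by (rule relpow_Suc_E)
  then obtain j' where "v < p" "j' < d v" "(F ^^ n) x (\<alpha> v j') < c"
    using Suc.IH unfolding inc_edges_iff by blast
  moreover have "\<forall>i<d v. (F ^^ n) x (\<alpha> v i) \<le> c"
    using funpow_le_on_alpha_closed[OF alpha_closed_lessThan x] c \<alpha> \<open>v < p\<close> by simp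
  ultimately show ?case
    using M_alpha_less[OF funpow_M_alpha_in_cube[OF x]] by simp
qed (use \<open>x j < c\<close> in simp)

lemma funpow_greater_along_walk:
  assumes x: "x \<in> cube I p" and c: "\<forall>i<p. c \<le> x i" and "c < x j" and "(j, v) \<in> E ^^ n"
  shows "c < (F ^^ n) x v"
  using assms(4)
proof (induction n arbitrary: v)
  case (Suc n)
  from Suc.prems obtain w where "(j, w) \<in> E ^^ n" "(w, v) \<in> E"
    by (rule relpow_Suc_E)
  then obtain j' where "v < p" "j' < d v" "c < (F ^^ n) x (\<alpha> v j')"
    using Suc.IH unfolding inc_edges_iff by blast
  moreover have "\<forall>i<d v. c \<le> (F ^^ n) x (\<alpha> v i)"
    using funpow_ge_on_alpha_closed[OF alpha_closed_lessThan x] c \<alpha> \<open>v < p\<close> by simp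
  ultimately show ?case
    using M_alpha_greater[OF funpow_M_alpha_in_cube[OF x]] by simp
qed (use \<open>c < x j\<close> in simp)

definition spread :: "(nat \<Rightarrow> real) \<Rightarrow> real" where
  "spread x = Max (x ` {..<p}) - Min (x ` {..<p})"

lemma spread_nonneg: "0 \<le> spread x"
  using Min_image_le_Max_image[OF finite_lessThan lessThan_p_nonempty] by (simp add: spread_def)

lemma spread_const:
  assumes "\<forall>i<p. x i = c"
  shows "spread x = 0"
proof -
  have "x ` {..<p} = {c}"
    using assms lessThan_p_nonempty by auto
  then show ?thesis
    by (simp add: spread_def)
qed

lemma spread_funpow_le:
  assumes "x \<in> cube I p"
  shows "spread ((F ^^ n) x) \<le> spread x"
  using Min_Max_funpow_bounds[OF alpha_closed_lessThan assms, of n] unfolding spread_def by linarith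

lemma spread_funpow_less:
  assumes erg: "ergodic_graph RV RE" and x: "x \<in> cube I p" and "i < p" "i' < p" "x i \<noteq> x i'"
  shows "\<exists>n. spread ((F ^^ n) x) < spread x"
proof -
  define lo hi where "lo = Min (x ` {..<p})" and "hi = Max (x ` {..<p})"
  have lo: "\<forall>i<p. lo \<le> x i" and hi: "\<forall>i<p. x i \<le> hi"
    by (simp_all add: lo_def hi_def)
  have "x i < x i' \<or> x i' < x i"
    using assms(5) by (rule neq_iff[THEN iffD1])
  then have "lo < hi"
    using lo hi assms(3,4) by (elim disjE) (meson le_less_trans less_le_trans)+
  obtain j where "j \<in> RV"
    using alpha_closed_root_set unfolding alpha_closed_def by blast
  then obtain T where T: "\<forall>v<p. (j, v) \<in> E ^^ T"
    using walks_of_common_length_from_root[OF erg] by blast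
  have orbit_bounds: "lo \<le> Min ((F ^^ T) x ` {..<p})" "Max ((F ^^ T) x ` {..<p}) \<le> hi"
    using Min_Max_funpow_bounds[OF alpha_closed_lessThan x] by (simp_all add: lo_def hi_def)
  consider "x j < hi" | "lo < x j"
    using \<open>lo < hi\<close> by linarith
  then have "Max ((F ^^ T) x ` {..<p}) < hi \<or> lo < Min ((F ^^ T) x ` {..<p})"
  proof cases
    case 1
    then have "\<forall>v<p. (F ^^ T) x v < hi"
      using funpow_less_along_walk[OF x hi 1] T by blast
    then show ?thesis
      using lessThan_p_nonempty by simp
  next
    case 2
    then have "\<forall>v<p. lo < (F ^^ T) x v"
      using funpow_greater_along_walk[OF x lo 2] T by blast
    then show ?thesis
      using lessThan_p_nonempty by simp
  qed
  then have "spread ((F ^^ T) x) < spread x"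
    using orbit_bounds unfolding spread_def lo_def hi_def by linarith
  then show ?thesis
    by blast
qed

lemma continuous_on_input: "continuous_on UNIV (\<lambda>x. input x i)"
proof (intro continuous_on_coordinatewise_then_product)
  fix j
  show "continuous_on UNIV (\<lambda>x. input x i j)"
    by (cases "j < d i") (simp_all add: input_def)
qed

lemma continuous_on_M_alpha: "continuous_on (cube I p) F"
proof (intro continuous_on_coordinatewise_then_product)
  fix i
  show "continuous_on (cube I p) (\<lambda>x. F x i)"
  proof (cases "i < p")
    case True
    have "continuous_on (cube I p) (\<lambda>x. input x i)"
      by (rule continuous_on_subset[OF continuous_on_input]) simp
    moreover have "(\<lambda>x. input x i) ` cube I p \<subseteq> cube I (d i)"
      using input_in_cube True by blast
    moreover have "continuous_on (cube I (d i)) (M i)"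
      using M_cont True by blast
    ultimately have "continuous_on (cube I p) (\<lambda>x. M i (input x i))"
      by (rule continuous_on_compose2[rotated 1])
    then show ?thesis
      using True by (simp add: M_alpha_apply)
  qed (simp add: M_alpha_def)
qed

lemma continuous_on_spread: "continuous_on UNIV spread"
  unfolding spread_def using lessThan_p_nonempty
  by (intro continuous_on_diff continuous_on_Max_image[of _ _ "\<lambda>x. x"]
      continuous_on_Min_image[of _ _ "\<lambda>x. x"]) auto

lemma orbit_convergent_subseq:
  assumes x: "x \<in> cube I p"
  obtains r y where "strict_mono r" "y \<in> cube I p" "(\<lambda>k. (F ^^ r k) x) \<longlonglongrightarrow> y"
proof -
  define lo hi where "lo = Min (x ` {..<p})" and "hi = Max (x ` {..<p})"
  have orbit: "lo \<le> (F ^^ n) x i" "(F ^^ n) x i \<le> hi" if "i < p" for n i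
    using funpow_ge_on_alpha_closed[OF alpha_closed_lessThan x, of lo]
      funpow_le_on_alpha_closed[OF alpha_closed_lessThan x, of hi] that
    by (simp_all add: lo_def hi_def)
  have "bounded (range (\<lambda>k. (F ^^ k) x i))" if "i < p" for i
    using orbit[OF that] by (intro bounded_subset[OF bounded_closed_interval[of lo hi]]) auto
  then obtain r where r: "strict_mono r" "\<forall>i<p. convergent (\<lambda>k. (F ^^ r k) x i)"
    using convergent_subseq_coordinates[of p "\<lambda>k. (F ^^ k) x"] by blast
  define y where "y = restrict (\<lambda>i. lim (\<lambda>k. (F ^^ r k) x i)) {..<p}"
  have lim: "(\<lambda>k. (F ^^ r k) x i) \<longlonglongrightarrow> y i" for i
  proof (cases "i < p")
    case True
    then show ?thesis
      using r(2) by (simp add: y_def convergent_LIMSEQ_iff)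
  next
    case False
    then show ?thesis
      using PiE_arb[OF funpow_M_alpha_in_cube[OF x]] by (simp add: y_def)
  qed
  have "x ` {..<p} \<subseteq> I"
    using x by (auto simp: PiE_iff)
  moreover have "lo \<in> x ` {..<p}" "hi \<in> x ` {..<p}"
    unfolding lo_def hi_def using lessThan_p_nonempty by (intro Min_in Max_in; simp)+
  ultimately have "lo \<in> I" "hi \<in> I"
    by (simp_all add: subsetD)
  have "y \<in> cube I p"
  proof (rule PiE_I)
    fix i
    assume "i \<in> {..<p}"
    then have "lo \<le> y i" "y i \<le> hi"
      using LIMSEQ_le_const[OF lim] LIMSEQ_le_const2[OF lim] orbit by auto
    then show "y i \<in> I"
      using I \<open>lo \<in> I\<close> \<open>hi \<in> I\<close> unfolding is_interval_1 by blast
  qed (simp add: y_def)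
  moreover have "(\<lambda>k. (F ^^ r k) x) \<longlonglongrightarrow> y"
    unfolding tendsto_fun_iff using lim by blast
  ultimately show ?thesis
    using r(1) that by blast
qed

lemma spread_funpow_tendsto_0:
  assumes erg: "ergodic_graph RV RE" and x: "x \<in> cube I p"
  shows "(\<lambda>n. spread ((F ^^ n) x)) \<longlonglongrightarrow> 0"
proof -
  define s where "s = (\<lambda>n. spread ((F ^^ n) x))"
  have "decseq s"
    using spread_funpow_le[OF funpow_M_alpha_in_cube[OF x], of 1] by (intro decseq_SucI) (simp add: s_def)
  moreover have "bdd_below (range s)"
    unfolding s_def by (rule bdd_belowI2[OF spread_nonneg])
  ultimately have sL: "s \<longlonglongrightarrow> (INF n. s n)"
    by (rule LIMSEQ_decseq_INF[rotated])
  define L where "L = (INF n. s n)"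
  obtain r y where r: "strict_mono r" and y: "y \<in> cube I p" and lim: "(\<lambda>k. (F ^^ r k) x) \<longlonglongrightarrow> y"
    using orbit_convergent_subseq[OF x] by blast
  have spread_y: "spread ((F ^^ m) y) = L" for m
  proof (rule LIMSEQ_unique)
    have "continuous_on (cube I p) (F ^^ m)"
      by (rule continuous_on_funpow[OF continuous_on_M_alpha]) (use M_alpha_in_cube in blast)
    then have "continuous_on (cube I p) (\<lambda>z. spread ((F ^^ m) z))"
      by (rule continuous_on_compose2[OF continuous_on_spread]) simp
    then show "(\<lambda>k. spread ((F ^^ m) ((F ^^ r k) x))) \<longlonglongrightarrow> spread ((F ^^ m) y)"
      by (rule continuous_on_tendsto_compose[OF _ lim y])
        (intro always_eventually allI funpow_M_alpha_in_cube[OF x])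
    have "strict_mono (\<lambda>k. m + r k)"
      using r by (simp add: strict_mono_def)
    from LIMSEQ_subseq_LIMSEQ[OF sL this]
    show "(\<lambda>k. spread ((F ^^ m) ((F ^^ r k) x))) \<longlonglongrightarrow> L"
      by (simp add: L_def s_def comp_def funpow_add)
  qed
  have "L = 0"
  proof (cases "\<exists>i<p. \<exists>i'<p. y i \<noteq> y i'")
    case True
    then obtain n where "spread ((F ^^ n) y) < spread y"
      using spread_funpow_less[OF erg y] by blast
    then show ?thesis
      using spread_y[of n] spread_y[of 0] by simp
  next
    case False
    have "0 < p"
      using p by simp
    with False have "\<forall>i<p. y i = y 0"
      by metis
    then have "spread y = 0"
      by (rule spread_const)
    then show ?thesis
      using spread_y[of 0] by simp
  qed
  with sL show ?thesis
    unfolding L_def s_def by simp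
qed

lemma unique_invariant_mean_if_ergodic:
  assumes erg: "ergodic_graph RV RE"
  shows "has_unique_invariant_mean I p F"
  unfolding has_unique_invariant_mean_def
proof (intro exI conjI allI impI ballI)
  show "invariant_mean I p F (lower_limit {..<p})"
    by (rule invariant_mean_lower_limit[OF alpha_closed_lessThan])
  fix K x
  assume K: "invariant_mean I p F K" and x: "x \<in> cube I p"
  have lower: "(\<lambda>n. Min ((F ^^ n) x ` {..<p})) \<longlonglongrightarrow> lower_limit {..<p} x"
    by (rule tendsto_lower_limit[OF alpha_closed_lessThan x])
  have "(\<lambda>n. Min ((F ^^ n) x ` {..<p}) + spread ((F ^^ n) x)) \<longlonglongrightarrow> lower_limit {..<p} x + 0"
    by (intro tendsto_add lower spread_funpow_tendsto_0[OF erg x])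
  then have upper: "(\<lambda>n. Max ((F ^^ n) x ` {..<p})) \<longlonglongrightarrow> lower_limit {..<p} x"
    by (simp add: spread_def)
  have "is_mean I p K"
    using K unfolding invariant_mean_def by blast
  then have "Min ((F ^^ n) x ` {..<p}) \<le> K ((F ^^ n) x)" "K ((F ^^ n) x) \<le> Max ((F ^^ n) x ` {..<p})"
    for n
    using funpow_M_alpha_in_cube[OF x] unfolding is_mean_def by blast+
  then have "Min ((F ^^ n) x ` {..<p}) \<le> K x" "K x \<le> Max ((F ^^ n) x ` {..<p})" for n
    using invariant_mean_funpow[OF K x] by simp_all
  then have "lower_limit {..<p} x \<le> K x" "K x \<le> lower_limit {..<p} x"
    by (intro LIMSEQ_le_const2[OF lower] LIMSEQ_le_const[OF upper]; simp)+
  then show "K x = lower_limit {..<p} x"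
    by simp
qed

theorem unique_invariant_mean_iff_ergodic_root_graph:
  "has_unique_invariant_mean I p F \<longleftrightarrow> ergodic_graph RV RE"
  using unique_invariant_mean_if_ergodic irreducible_root_graph_if_unique
    aperiodic_root_graph_if_unique alpha_closed_root_set
  unfolding ergodic_graph_def alpha_closed_def by blast

end

theorem theorem3p3:
  fixes I :: "real set" and p :: nat and d :: "nat \<Rightarrow> nat"
    and \<alpha> :: "nat \<Rightarrow> nat \<Rightarrow> nat" and M :: "nat \<Rightarrow> (nat \<Rightarrow> real) \<Rightarrow> real"
  assumes I: "is_interval I" and I_nondeg: "\<exists>a\<in>I. \<exists>b\<in>I. a < b"
    and p: "p \<ge> 1"
    and d: "\<forall>i<p. d i \<ge> 1"
    and \<alpha>: "\<forall>i<p. \<forall>j<d i. \<alpha> i j < p"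
    and M_strict: "\<forall>i<p. strict_mean I (d i) (M i)"
    and M_cont: "\<forall>i<p. continuous_on (cube I (d i)) (M i)"
  shows "(\<exists>K. invariant_mean I p (M_alpha p d \<alpha> M) K \<and>
            (\<forall>K'. invariant_mean I p (M_alpha p d \<alpha> M) K' \<longrightarrow>
                    (\<forall>x\<in>cube I p. K' x = K x)))
         \<longleftrightarrow> ergodic_graph (root_set {..<p} (inc_edges p d \<alpha>))
                (Restr (inc_edges p d \<alpha>) (root_set {..<p} (inc_edges p d \<alpha>)))"
proof -
  interpret averaging_mapping I p d \<alpha> M
    using assms by unfold_locales
  show ?thesis
    using unique_invariant_mean_iff_ergodic_root_graph unfolding has_unique_invariant_mean_def .
qed

end
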